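(* Let $p$ be a prime and $d$ a positive integer. For every dimension $k\geq d+1$ and every $S\subseteq\mathbb{F}_p^k$ with $|S|\geq\binom{d+k+1}{k}+1$, there exists a function $h:\mathbb{F}_p^k\to\mathbb{F}_p$ such that $\deg(h)=k(p-1)-(d+1)$ and $\supp(h)\subseteq S$.
   Context: Functions $\mathbb{F}_p^k\to\mathbb{F}_p$ are identified with their unique polynomial representations with individual degrees in $\{0,\dots,p-1\}$; the degree is the maximal total degree of a monomial with nonzero coefficient. $\supp(h)=\{\alpha\in\mathbb{F}_p^k: h(\alpha)\neq0\}$. *)

theory Defs
  imports "HOL-Computational_Algebra.Primes"
begin

text \<open>F_p is modelled as {0..<p} with arithmetic mod p; a point of F_p^k is a map
  alpha :: nat => nat with alpha i < p for i < k and alpha i = 0 for i >= k.\<close>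

definition points :: "nat \<Rightarrow> nat \<Rightarrow> (nat \<Rightarrow> nat) set" where
  "points p k = {\<alpha>. (\<forall>i<k. \<alpha> i < p) \<and> (\<forall>i\<ge>k. \<alpha> i = 0)}"

definition exps :: "nat \<Rightarrow> nat \<Rightarrow> (nat \<Rightarrow> nat) set" where
  "exps p k = {e. (\<forall>i<k. e i < p) \<and> (\<forall>i\<ge>k. e i = 0)}"

definition tdeg :: "nat \<Rightarrow> (nat \<Rightarrow> nat) \<Rightarrow> nat" where
  "tdeg k e = (\<Sum>i<k. e i)"

definition mono_eval :: "nat \<Rightarrow> (nat \<Rightarrow> nat) \<Rightarrow> (nat \<Rightarrow> nat) \<Rightarrow> nat" where
  "mono_eval k e \<alpha> = (\<Prod>i<k. \<alpha> i ^ e i)"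

definition represents :: "nat \<Rightarrow> nat \<Rightarrow> ((nat \<Rightarrow> nat) \<Rightarrow> nat) \<Rightarrow> ((nat \<Rightarrow> nat) \<Rightarrow> nat) \<Rightarrow> bool" where
  "represents p k c h \<longleftrightarrow>
     (\<forall>e. c e < p) \<and> (\<forall>e. e \<notin> exps p k \<longrightarrow> c e = 0) \<and>
     (\<forall>\<alpha>\<in>points p k. h \<alpha> = (\<Sum>e\<in>exps p k. c e * mono_eval k e \<alpha>) mod p)"

text \<open>deg(h) = D: the (unique) reduced representation of h has degree D.\<close>
definition fun_degree_eq :: "nat \<Rightarrow> nat \<Rightarrow> ((nat \<Rightarrow> nat) \<Rightarrow> nat) \<Rightarrow> nat \<Rightarrow> bool" where
  "fun_degree_eq p k h D \<longleftrightarrow>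
     (\<exists>c. represents p k c h \<and>
          (\<exists>e\<in>exps p k. c e \<noteq> 0 \<and> tdeg k e = D) \<and>
          (\<forall>e\<in>exps p k. c e \<noteq> 0 \<longrightarrow> tdeg k e \<le> D))"

definition supp :: "nat \<Rightarrow> nat \<Rightarrow> ((nat \<Rightarrow> nat) \<Rightarrow> nat) \<Rightarrow> (nat \<Rightarrow> nat) set" where
  "supp p k h = {\<alpha>\<in>points p k. h \<alpha> \<noteq> 0}"

end

theory Submission
  imports Defs "HOL-Number_Theory.Number_Theory" "HOL-Library.FuncSet"
begin

text \<open>For h : S \<rightarrow> \<int> let moment h f be the sum of h(a) a^f over a \<in> S, and let W_m consist of
  those h all of whose moments at reduced monomials of degree at most m vanish mod p.
  Since S has more points than there are monomials of degree at most d, counting residues gives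
  an h \<in> W_d that is nonzero mod p somewhere on S. If W_d = W_(d+1), then W_d would be contained in
  every W_m, because multiplying h by a coordinate x_i shifts degrees by one; but a function
  orthogonal to all reduced monomials vanishes on S, since the indicator of a point is a
  polynomial. Hence some h \<in> W_d has nonzero moment at a monomial x^f of degree d + 1.
  The function h 1_S mod p then has the required degree: up to sign, its coefficient at x^e is the
  moment of h at the complementary monomial x^(p-1-e), plus moments of lower degree. These vanish
  when deg e > k(p - 1) - (d + 1), while the coefficient at the complement of f is nonzero.\<close>

lemma fermat_little_int:
  fixes p x :: nat
  assumes "prime p"
  shows "[int x ^ p = int x] (mod int p)"
proof (cases "p dvd x")
  case True
  moreover have "x dvd x ^ p" using prime_gt_0_nat[OF assms] by simp
  ultimately have "[x ^ p = 0] (mod p)" "[x = 0] (mod p)"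
    using dvd_trans by (auto simp: cong_0_iff)
  then have "[x ^ p = x] (mod p)" by (metis cong_sym cong_trans)
  then show ?thesis by (metis cong_int_iff of_nat_power)
next
  case False
  then have "[x * x ^ (p - 1) = x * 1] (mod p)"
    using fermat_theorem assms cong_scalar_left by blast
  moreover have "x * x ^ (p - 1) = x ^ p"
    using prime_gt_0_nat[OF assms] by (metis Suc_diff_1 power_Suc)
  ultimately show ?thesis by (metis cong_int_iff mult_1_right of_nat_power)
qed

lemma sum_pow_mult_pow_cong:
  fixes p x a :: nat
  assumes "prime p" "x < p" "a < p"
  shows "[(\<Sum>j<p. int a ^ (p - Suc j) * int x ^ j) = of_bool (x \<noteq> a)] (mod int p)"
proof (cases "x = a")
  case True
  have "(\<Sum>j<p. int a ^ (p - Suc j) * int x ^ j) = (\<Sum>j<p. int a ^ (p - 1))"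
    by (intro sum.cong refl) (simp add: True flip: power_add)
  then show ?thesis using True by (simp add: cong_0_iff)
next
  case False
  let ?s = "\<Sum>j<p. int a ^ (p - Suc j) * int x ^ j"
  have "(int x - int a) * ?s = int x ^ p - int a ^ p" by (rule power_diff_sumr2[symmetric])
  also have "[\<dots> = (int x - int a) * 1] (mod int p)"
    using fermat_little_int[OF assms(1)] by (simp add: cong_diff)
  finally have "[(int x - int a) * ?s = (int x - int a) * 1] (mod int p)" .
  moreover have "\<not> int p dvd int x - int a"
  proof
    assume "int p dvd int x - int a"
    then have "[int x = int a] (mod int p)" by (simp add: cong_iff_dvd_diff)
    then have "int x = int a" using assms(2,3) by (intro cong_less_imp_eq_int) auto
    then show False using False by simp
  qed
  then have "coprime (int x - int a) (int p)"
    using assms(1) by (simp add: prime_imp_coprime coprime_commute)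
  ultimately have "[?s = 1] (mod int p)" by (metis cong_mult_lcancel)
  then show ?thesis using False by simp
qed

text \<open>Modulo p, (x - a)^(p-1) is the sum of the a^(p-1-j) x^j, so delta_coeff p a j is the
  coefficient of x^j in the indicator 1 - (x - a)^(p-1) of the point a of F_p.\<close>
definition delta_coeff :: "nat \<Rightarrow> nat \<Rightarrow> nat \<Rightarrow> int" where
  "delta_coeff p a j = of_bool (j = 0) - int a ^ (p - Suc j)"

lemma delta_coeff_sum_cong:
  fixes p x a :: nat
  assumes "prime p" "x < p" "a < p"
  shows "[(\<Sum>j<p. delta_coeff p a j * int x ^ j) = of_bool (x = a)] (mod int p)"
proof -
  have "(\<Sum>j<p. delta_coeff p a j * int x ^ j) = 1 - (\<Sum>j<p. int a ^ (p - Suc j) * int x ^ j)"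
    using prime_gt_0_nat[OF assms(1)]
    by (simp add: delta_coeff_def left_diff_distrib sum_subtractf sum.If_cases)
  also have "[\<dots> = 1 - of_bool (x \<noteq> a)] (mod int p)"
    by (rule cong_diff[OF cong_refl sum_pow_mult_pow_cong[OF assms]])
  also have "1 - of_bool (x \<noteq> a) = (of_bool (x = a) :: int)" by simp
  finally show ?thesis .
qed

lemma exps_eq_image_PiE:
  "exps p k = (\<lambda>g i. if i < k then g i else 0) ` (PiE {..<k} (\<lambda>_. {..<p}))"
proof (intro equalityI subsetI)
  fix e assume e: "e \<in> exps p k"
  then have "restrict e {..<k} \<in> PiE {..<k} (\<lambda>_. {..<p})"
    and "e = (\<lambda>i. if i < k then restrict e {..<k} i else 0)"
    by (auto simp: exps_def)
  then show "e \<in> (\<lambda>g i. if i < k then g i else 0) ` (PiE {..<k} (\<lambda>_. {..<p}))" by blast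
qed (auto simp: exps_def PiE_def Pi_def)

lemma finite_exps: "finite (exps p k)"
  unfolding exps_eq_image_PiE by (intro finite_imageI finite_PiE) auto

lemma finite_points: "finite (points p k)"
  using finite_exps[of p k] by (simp add: points_def exps_def)

lemma sum_exps_prod:
  fixes \<phi> :: "nat \<Rightarrow> nat \<Rightarrow> 'a::comm_semiring_1"
  shows "(\<Sum>e\<in>exps p k. \<Prod>i<k. \<phi> i (e i)) = (\<Prod>i<k. \<Sum>j<p. \<phi> i j)"
proof -
  let ?ext = "\<lambda>g i. if i < k then g i else (0::nat)"
  let ?P = "PiE {..<k} (\<lambda>_::nat. {..<p})"
  have "inj_on ?ext ?P"
  proof
    fix g h assume "g \<in> ?P" "h \<in> ?P" and eq: "?ext g = ?ext h"
    have "g i = h i" if "i < k" for i using fun_cong[OF eq, of i] that by simp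
    then show "g = h" using \<open>g \<in> ?P\<close> \<open>h \<in> ?P\<close> by (intro PiE_ext) auto
  qed
  then have "(\<Sum>e\<in>exps p k. \<Prod>i<k. \<phi> i (e i)) = (\<Sum>g\<in>?P. \<Prod>i<k. \<phi> i (?ext g i))"
    unfolding exps_eq_image_PiE by (rule sum.reindex[unfolded comp_def])
  also have "\<dots> = (\<Sum>g\<in>?P. \<Prod>i<k. \<phi> i (g i))"
    by (intro sum.cong prod.cong) auto
  also have "\<dots> = (\<Prod>i<k. \<Sum>j<p. \<phi> i j)"
    by (rule prod_sum_PiE[symmetric]) auto
  finally show ?thesis .
qed

lemma points_eqI:
  assumes "\<alpha> \<in> points p k" "a \<in> points p k" "\<And>i. i < k \<Longrightarrow> \<alpha> i = a i"
  shows "\<alpha> = a"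
proof
  fix i show "\<alpha> i = a i" using assms by (cases "i < k") (auto simp: points_def)
qed

lemma prod_of_bool_eq:
  "finite A \<Longrightarrow> (\<Prod>x\<in>A. of_bool (P x)) = (of_bool (\<forall>x\<in>A. P x) :: 'a::comm_semiring_1)"
  by (induction A rule: finite_induct) auto

definition indicator_coeff :: "nat \<Rightarrow> nat \<Rightarrow> (nat \<Rightarrow> nat) \<Rightarrow> (nat \<Rightarrow> nat) \<Rightarrow> int" where
  "indicator_coeff p k a e = (\<Prod>i<k. delta_coeff p (a i) (e i))"

lemma indicator_coeff_sum_cong:
  assumes "prime p" "\<alpha> \<in> points p k" "a \<in> points p k"
  shows "[(\<Sum>e\<in>exps p k. indicator_coeff p k a e * int (mono_eval k e \<alpha>)) = of_bool (\<alpha> = a)]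
           (mod int p)"
proof -
  have "(\<Sum>e\<in>exps p k. indicator_coeff p k a e * int (mono_eval k e \<alpha>))
      = (\<Prod>i<k. \<Sum>j<p. delta_coeff p (a i) j * int (\<alpha> i) ^ j)"
    unfolding indicator_coeff_def mono_eval_def
    by (simp add: prod.distrib flip: sum_exps_prod)
  also have "[\<dots> = (\<Prod>i<k. of_bool (\<alpha> i = a i))] (mod int p)"
    using assms by (intro cong_prod delta_coeff_sum_cong) (auto simp: points_def)
  also have "(\<Prod>i<k. of_bool (\<alpha> i = a i)) = (of_bool (\<alpha> = a) :: int)"
    using points_eqI[OF assms(2,3)] by (auto simp: prod_of_bool_eq)
  finally show ?thesis .
qed

definition moment ::
    "nat \<Rightarrow> (nat \<Rightarrow> nat) set \<Rightarrow> ((nat \<Rightarrow> nat) \<Rightarrow> int) \<Rightarrow> (nat \<Rightarrow> nat) \<Rightarrow> int" where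
  "moment k S h f = (\<Sum>a\<in>S. h a * int (mono_eval k f a))"

definition orthogonal_upto ::
    "nat \<Rightarrow> nat \<Rightarrow> (nat \<Rightarrow> nat) set \<Rightarrow> nat \<Rightarrow> ((nat \<Rightarrow> nat) \<Rightarrow> int) set" where
  "orthogonal_upto p k S m = {h. \<forall>f\<in>exps p k. tdeg k f \<le> m \<longrightarrow> int p dvd moment k S h f}"

lemma orthogonal_uptoI:
  "(\<And>f. f \<in> exps p k \<Longrightarrow> tdeg k f \<le> m \<Longrightarrow> int p dvd moment k S h f) \<Longrightarrow>
    h \<in> orthogonal_upto p k S m"
  by (simp add: orthogonal_upto_def)

lemma orthogonal_uptoD:
  "h \<in> orthogonal_upto p k S m \<Longrightarrow> f \<in> exps p k \<Longrightarrow> tdeg k f \<le> m \<Longrightarrow>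
    int p dvd moment k S h f"
  by (simp add: orthogonal_upto_def)

lemma dvd_of_dvd_all_moments:
  assumes "prime p" "S \<subseteq> points p k" "\<forall>f\<in>exps p k. int p dvd moment k S h f" "\<alpha> \<in> S"
  shows "int p dvd h \<alpha>"
proof -
  have "finite S" using assms(2) finite_points finite_subset by blast
  have "(\<Sum>e\<in>exps p k. indicator_coeff p k \<alpha> e * moment k S h e)
      = (\<Sum>a\<in>S. h a * (\<Sum>e\<in>exps p k. indicator_coeff p k \<alpha> e * int (mono_eval k e a)))"
    unfolding moment_def
    by (simp add: sum_distrib_left sum_distrib_right sum.swap[of _ S] mult.assoc mult.left_commute)
  also have "[\<dots> = (\<Sum>a\<in>S. h a * of_bool (a = \<alpha>))] (mod int p)"
    using assms(1,2,4) by (intro cong_sum cong_scalar_left indicator_coeff_sum_cong) auto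
  also have "(\<Sum>a\<in>S. h a * of_bool (a = \<alpha>)) = h \<alpha>"
    using \<open>finite S\<close> assms(4) by simp
  finally have "[(\<Sum>e\<in>exps p k. indicator_coeff p k \<alpha> e * moment k S h e) = h \<alpha>] (mod int p)" .
  moreover have "int p dvd (\<Sum>e\<in>exps p k. indicator_coeff p k \<alpha> e * moment k S h e)"
    using assms(3) by (intro dvd_sum) auto
  ultimately show ?thesis using cong_dvd_iff by blast
qed

lemma mono_eval_split:
  "i < k \<Longrightarrow> mono_eval k g a = a i ^ g i * (\<Prod>j\<in>{..<k}-{i}. a j ^ g j)"
  unfolding mono_eval_def by (subst prod.remove[of _ i]) auto

lemma tdeg_split:
  "i < k \<Longrightarrow> tdeg k g = g i + (\<Sum>j\<in>{..<k}-{i}. g j)"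
  unfolding tdeg_def by (subst sum.remove[of _ i]) auto

text \<open>The exponent vector of x_i * x^g after the reduction x_i^p = x_i.\<close>
definition mult_var_exp :: "nat \<Rightarrow> nat \<Rightarrow> (nat \<Rightarrow> nat) \<Rightarrow> (nat \<Rightarrow> nat)" where
  "mult_var_exp p i g = g(i := if g i = p - 1 then 1 else Suc (g i))"

lemma mult_var_exp_in_exps:
  "1 < p \<Longrightarrow> i < k \<Longrightarrow> g \<in> exps p k \<Longrightarrow> mult_var_exp p i g \<in> exps p k"
  by (auto simp: mult_var_exp_def exps_def)

lemma tdeg_mult_var_exp_le:
  assumes "i < k"
  shows "tdeg k (mult_var_exp p i g) \<le> Suc (tdeg k g)"
proof -
  have "(\<Sum>j\<in>{..<k}-{i}. mult_var_exp p i g j) = (\<Sum>j\<in>{..<k}-{i}. g j)"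
    by (intro sum.cong) (auto simp: mult_var_exp_def)
  then show ?thesis
    using tdeg_split[OF assms, of "mult_var_exp p i g"] tdeg_split[OF assms, of g]
    by (auto simp: mult_var_exp_def)
qed

lemma mono_eval_mult_var_exp_cong:
  assumes "prime p" "i < k"
  shows "[int (a i) * int (mono_eval k g a) = int (mono_eval k (mult_var_exp p i g) a)] (mod int p)"
proof -
  have "[int (a i) * int (a i) ^ g i = int (a i) ^ mult_var_exp p i g i] (mod int p)"
  proof (cases "g i = p - 1")
    case True
    then have "int (a i) * int (a i) ^ g i = int (a i) ^ p"
      using prime_gt_0_nat[OF assms(1)] by (metis Suc_diff_1 power_Suc)
    then show ?thesis using True fermat_little_int[OF assms(1)] by (simp add: mult_var_exp_def)
  qed (simp add: mult_var_exp_def)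
  then have "[int (a i) * int (a i) ^ g i * int (\<Prod>j\<in>{..<k}-{i}. a j ^ g j)
      = int (a i) ^ mult_var_exp p i g i * int (\<Prod>j\<in>{..<k}-{i}. a j ^ g j)] (mod int p)"
    by (rule cong_mult[OF _ cong_refl])
  moreover have "(\<Prod>j\<in>{..<k}-{i}. a j ^ mult_var_exp p i g j) = (\<Prod>j\<in>{..<k}-{i}. a j ^ g j)"
    by (intro prod.cong) (auto simp: mult_var_exp_def)
  ultimately show ?thesis
    unfolding mono_eval_split[OF assms(2), of g] mono_eval_split[OF assms(2), of "mult_var_exp p i g"]
    by (simp add: mult.assoc)
qed

lemma orthogonal_upto_mult_var:
  assumes "prime p" "i < k" "h \<in> orthogonal_upto p k S (Suc m)"
  shows "(\<lambda>a. h a * int (a i)) \<in> orthogonal_upto p k S m"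
proof (rule orthogonal_uptoI)
  fix g assume g: "g \<in> exps p k" "tdeg k g \<le> m"
  have "[moment k S (\<lambda>a. h a * int (a i)) g = moment k S h (mult_var_exp p i g)] (mod int p)"
    unfolding moment_def mult.assoc
    by (intro cong_sum cong_scalar_left mono_eval_mult_var_exp_cong assms(1,2))
  moreover have "int p dvd moment k S h (mult_var_exp p i g)"
    using assms(3) mult_var_exp_in_exps[OF prime_gt_1_nat[OF assms(1)] assms(2) g(1)]
      tdeg_mult_var_exp_le[OF assms(2), of p g] g(2)
    by (auto intro: orthogonal_uptoD)
  ultimately show "int p dvd moment k S (\<lambda>a. h a * int (a i)) g" using cong_dvd_iff by blast
qed

lemma moment_lower_exp:
  assumes "i < k" "0 < f i"
  shows "moment k S h f = moment k S (\<lambda>a. h a * int (a i)) (f(i := f i - 1))"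
proof -
  have "(\<Prod>j\<in>{..<k}-{i}. a j ^ (f(i := f i - 1)) j) = (\<Prod>j\<in>{..<k}-{i}. a j ^ f j)" for a
    by (intro prod.cong) auto
  then have "mono_eval k f a = a i * mono_eval k (f(i := f i - 1)) a" for a
    unfolding mono_eval_split[OF assms(1)] using assms(2)
    by (cases "f i") (simp_all add: mult.assoc)
  then show ?thesis unfolding moment_def by (simp add: mult.assoc)
qed

lemma orthogonal_upto_Suc_stable:
  assumes "prime p" "orthogonal_upto p k S d \<subseteq> orthogonal_upto p k S (Suc d)"
  shows "orthogonal_upto p k S d \<subseteq> orthogonal_upto p k S (Suc d + n)"
proof (induction n)
  case 0 then show ?case using assms(2) by simp
next
  case (Suc n)
  show ?case
  proof (intro subsetI orthogonal_uptoI)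
    fix h f assume h: "h \<in> orthogonal_upto p k S d"
      and f: "f \<in> exps p k" "tdeg k f \<le> Suc d + Suc n"
    show "int p dvd moment k S h f"
    proof (cases "tdeg k f \<le> Suc d + n")
      case True
      then show ?thesis using Suc.IH h f(1) by (blast intro: orthogonal_uptoD)
    next
      case False
      then have "tdeg k f \<noteq> 0" by simp
      then obtain i where i: "i < k" "0 < f i" by (auto simp: tdeg_def)
      let ?f' = "f(i := f i - 1)"
      have "?f' \<in> exps p k" using f(1) i by (auto simp: exps_def)
      moreover have "tdeg k ?f' \<le> Suc d + n"
        using False f(2) i tdeg_split[OF i(1), of f] tdeg_split[OF i(1), of ?f'] by simp
      moreover have "(\<lambda>a. h a * int (a i)) \<in> orthogonal_upto p k S (Suc d + n)"
        using Suc.IH orthogonal_upto_mult_var[OF assms(1) i(1)] assms(2) h by blast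
      ultimately show ?thesis
        unfolding moment_lower_exp[of i k f, OF i] by (blast intro: orthogonal_uptoD)
    qed
  qed
qed

definition exps_upto :: "nat \<Rightarrow> nat \<Rightarrow> (nat \<Rightarrow> nat) set" where
  "exps_upto k d = {f. (\<forall>i\<ge>k. f i = 0) \<and> tdeg k f \<le> d}"

lemma exps_upto_subset_exps: "exps_upto k d \<subseteq> exps (Suc d) k"
proof
  fix f assume f: "f \<in> exps_upto k d"
  have "f i \<le> tdeg k f" if "i < k" for i
    unfolding tdeg_def using that by (intro member_le_sum) auto
  then show "f \<in> exps (Suc d) k" using f by (fastforce simp: exps_upto_def exps_def)
qed

lemma finite_exps_upto: "finite (exps_upto k d)"
  using finite_subset[OF exps_upto_subset_exps finite_exps] .

lemma card_exps_upto_le: "card (exps_upto k d) \<le> (d + k) choose k"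
proof (induction k arbitrary: d)
  case 0
  have "exps_upto 0 d = {\<lambda>_. 0}" by (auto simp: exps_upto_def tdeg_def)
  then show ?case by simp
next
  case (Suc k)
  let ?ext = "\<lambda>i f. f(k := d - i)"
  have "exps_upto (Suc k) d \<subseteq> (\<Union>i\<le>d. ?ext i ` exps_upto k i)"
  proof
    fix f assume f: "f \<in> exps_upto (Suc k) d"
    have "tdeg k (f(k := 0)) = tdeg k f" unfolding tdeg_def by (intro sum.cong) auto
    then have "tdeg (Suc k) f = tdeg k (f(k := 0)) + f k" by (simp add: tdeg_def)
    then have low: "f(k := 0) \<in> exps_upto k (d - f k)" and fk: "f k \<le> d"
      using f by (auto simp: exps_upto_def)
    have "f = ?ext (d - f k) (f(k := 0))" using fk by auto
    then have "f \<in> ?ext (d - f k) ` exps_upto k (d - f k)" using low by (rule image_eqI)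
    then show "f \<in> (\<Union>i\<le>d. ?ext i ` exps_upto k i)" using fk by (intro UN_I[of "d - f k"]) simp_all
  qed
  then have "card (exps_upto (Suc k) d) \<le> card (\<Union>i\<le>d. ?ext i ` exps_upto k i)"
    by (intro card_mono) (auto intro: finite_exps_upto)
  also have "\<dots> \<le> (\<Sum>i\<le>d. card (?ext i ` exps_upto k i))"
    by (rule card_UN_le) simp
  also have "\<dots> \<le> (\<Sum>i\<le>d. card (exps_upto k i))"
    by (intro sum_mono card_image_le finite_exps_upto)
  also have "\<dots> \<le> (\<Sum>i\<le>d. (k + i) choose i)"
  proof (intro sum_mono)
    fix i
    have "(i + k) choose k = (k + i) choose i"
      using binomial_symmetric[of k "i + k"] by (simp add: add.commute)
    then show "card (exps_upto k i) \<le> (k + i) choose i" using Suc.IH[of i] by simp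
  qed
  also have "\<dots> = Suc (k + d) choose d" by (rule sum_choose_lower)
  also have "\<dots> = (d + Suc k) choose Suc k"
    using binomial_symmetric[of d "Suc (k + d)"] by (simp add: add.commute)
  finally show ?case .
qed

lemma exists_orthogonal_nonzero:
  assumes "prime p" "finite S" "finite L" "card L < card S"
  shows "\<exists>h. (\<exists>a\<in>S. \<not> int p dvd h a) \<and> (\<forall>f\<in>L. int p dvd moment k S h f)"
proof -
  have p1: "1 < p" using prime_gt_1_nat[OF assms(1)] .
  define X where "X = PiE S (\<lambda>_. {0..<int p})"
  define Y where "Y = PiE L (\<lambda>_. {0..<int p})"
  define \<Phi> where "\<Phi> = (\<lambda>h. restrict (\<lambda>f. moment k S h f mod int p) L)"
  have "\<Phi> ` X \<subseteq> Y" using p1 by (auto simp: \<Phi>_def Y_def)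
  moreover have "finite Y" using assms(3) by (simp add: Y_def finite_PiE)
  moreover have "card Y < card X"
    using assms(2-4) power_strict_increasing[OF assms(4) p1] by (simp add: X_def Y_def card_PiE)
  ultimately have "\<not> inj_on \<Phi> X"
    using card_inj_on_le[of \<Phi> X Y] by linarith
  then obtain h1 h2 where h12: "h1 \<in> X" "h2 \<in> X" "h1 \<noteq> h2" "\<Phi> h1 = \<Phi> h2"
    unfolding inj_on_def by blast
  then obtain a where a: "a \<in> S" "h1 a \<noteq> h2 a"
    unfolding X_def using PiE_ext by blast
  define h where "h = (\<lambda>a. h1 a - h2 a)"
  have "\<not> int p dvd h a"
  proof
    assume "int p dvd h a"
    then have "[h1 a = h2 a] (mod int p)" by (simp add: h_def cong_iff_dvd_diff)
    moreover have "h1 a \<in> {0..<int p}" "h2 a \<in> {0..<int p}"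
      using h12(1,2) a(1) by (auto simp: X_def)
    ultimately show False using a(2) cong_less_imp_eq_int by auto
  qed
  moreover have "int p dvd moment k S h f" if "f \<in> L" for f
  proof -
    have "[moment k S h1 f = moment k S h2 f] (mod int p)"
      using fun_cong[OF h12(4), of f] that by (simp add: \<Phi>_def cong_def)
    then show ?thesis
      by (simp add: h_def moment_def cong_iff_dvd_diff sum_subtractf left_diff_distrib)
  qed
  ultimately show ?thesis using a(1) by blast
qed

definition compl_exp :: "nat \<Rightarrow> nat \<Rightarrow> (nat \<Rightarrow> nat) \<Rightarrow> nat set \<Rightarrow> (nat \<Rightarrow> nat)" where
  "compl_exp p k e T = (\<lambda>i. if i < k \<and> i \<notin> T then p - 1 - e i else 0)"

definition expansion_coeff :: "nat \<Rightarrow> (nat \<Rightarrow> nat) \<Rightarrow> nat set \<Rightarrow> int" where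
  "expansion_coeff k e T = (\<Prod>i\<in>T. of_bool (e i = 0)) * (-1) ^ card ({..<k} - T)"

text \<open>Multiplying out the product defining indicator_coeff: T is the set of factors from which
  the constant term of delta_coeff is taken.\<close>
lemma indicator_coeff_expand:
  "indicator_coeff p k a e
     = (\<Sum>T\<in>Pow {..<k}. expansion_coeff k e T * int (mono_eval k (compl_exp p k e T) a))"
proof -
  have "indicator_coeff p k a e = (\<Prod>i<k. of_bool (e i = 0) + - (int (a i) ^ (p - Suc (e i))))"
    by (simp add: indicator_coeff_def delta_coeff_def)
  also have "\<dots> = (\<Sum>T\<in>Pow {..<k}. (\<Prod>i\<in>T. of_bool (e i = 0)) *
                      (\<Prod>i\<in>{..<k} - T. - (int (a i) ^ (p - Suc (e i)))))"
    by (rule prod_add) simp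
  also have "\<dots> = (\<Sum>T\<in>Pow {..<k}. expansion_coeff k e T * int (mono_eval k (compl_exp p k e T) a))"
  proof (rule sum.cong[OF refl])
    fix T assume T: "T \<in> Pow {..<k}"
    have "int (mono_eval k (compl_exp p k e T) a)
        = (\<Prod>i\<in>{..<k} - T. int (a i) ^ compl_exp p k e T i) * (\<Prod>i\<in>T. int (a i) ^ compl_exp p k e T i)"
      unfolding mono_eval_def using T by (simp add: prod.subset_diff)
    also have "(\<Prod>i\<in>T. int (a i) ^ compl_exp p k e T i) = 1"
      by (intro prod.neutral) (auto simp: compl_exp_def)
    also have "(\<Prod>i\<in>{..<k} - T. int (a i) ^ compl_exp p k e T i)
        = (\<Prod>i\<in>{..<k} - T. int (a i) ^ (p - Suc (e i)))"
      by (intro prod.cong) (auto simp: compl_exp_def)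
    finally show "(\<Prod>i\<in>T. of_bool (e i = 0)) * (\<Prod>i\<in>{..<k} - T. - (int (a i) ^ (p - Suc (e i))))
        = expansion_coeff k e T * int (mono_eval k (compl_exp p k e T) a)"
      by (simp add: expansion_coeff_def prod_uminus mult.assoc)
  qed
  finally show ?thesis .
qed

lemma compl_exp_in_exps: "0 < p \<Longrightarrow> compl_exp p k e T \<in> exps p k"
  by (auto simp: compl_exp_def exps_def)

lemma compl_exp_compl_exp:
  assumes "e \<in> exps p k"
  shows "compl_exp p k (compl_exp p k e {}) {} = e"
proof
  fix i show "compl_exp p k (compl_exp p k e {}) {} i = e i"
    using assms by (cases "i < k") (auto simp: compl_exp_def exps_def)
qed

lemma tdeg_compl_exp_empty:
  assumes "e \<in> exps p k"
  shows "tdeg k (compl_exp p k e {}) + tdeg k e = k * (p - 1)"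
proof -
  have "tdeg k (compl_exp p k e {}) + tdeg k e = (\<Sum>i<k. compl_exp p k e {} i + e i)"
    by (simp add: tdeg_def sum.distrib)
  also have "\<dots> = (\<Sum>i<k. p - 1)"
    using assms by (intro sum.cong) (auto simp: compl_exp_def exps_def)
  finally show ?thesis by simp
qed

lemma tdeg_compl_exp_less:
  assumes "1 < p" "e \<in> exps p k" "T \<subseteq> {..<k}" "T \<noteq> {}" "expansion_coeff k e T \<noteq> 0"
  shows "tdeg k (compl_exp p k e T) + tdeg k e < k * (p - 1)"
proof -
  obtain i where i: "i \<in> T" using assms(4) by blast
  then have "i < k" "e i = 0"
    using assms(3,5) finite_subset[OF assms(3)] by (auto simp: expansion_coeff_def prod_of_bool_eq)
  let ?g = "\<lambda>j. compl_exp p k e T j + e j"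
  have "tdeg k (compl_exp p k e T) + tdeg k e = ?g i + (\<Sum>j\<in>{..<k} - {i}. ?g j)"
    using \<open>i < k\<close> by (simp add: tdeg_def sum.distrib sum.remove[of "{..<k}" i])
  also have "\<dots> \<le> 0 + (\<Sum>j\<in>{..<k} - {i}. p - 1)"
    using assms(2) i \<open>e i = 0\<close>
    by (intro add_mono sum_mono) (auto simp: compl_exp_def exps_def)
  also have "\<dots> = (k - 1) * (p - 1)" using \<open>i < k\<close> by simp
  also have "\<dots> < k * (p - 1)" using \<open>i < k\<close> assms(1) by simp
  finally show ?thesis .
qed

definition lagrange_coeff ::
    "nat \<Rightarrow> nat \<Rightarrow> (nat \<Rightarrow> nat) set \<Rightarrow> ((nat \<Rightarrow> nat) \<Rightarrow> int) \<Rightarrow> (nat \<Rightarrow> nat) \<Rightarrow> int" where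
  "lagrange_coeff p k S h e = (\<Sum>a\<in>S. h a * indicator_coeff p k a e)"

lemma lagrange_coeff_expand:
  "lagrange_coeff p k S h e
     = (\<Sum>T\<in>Pow {..<k}. expansion_coeff k e T * moment k S h (compl_exp p k e T))"
  unfolding lagrange_coeff_def indicator_coeff_expand moment_def
  by (simp add: sum_distrib_left sum.swap[of _ S] mult.left_commute)

lemma lagrange_coeff_cong:
  assumes "prime p" "h \<in> orthogonal_upto p k S d" "e \<in> exps p k"
    and "k * (p - 1) \<le> tdeg k e + Suc d"
  shows "[lagrange_coeff p k S h e = (-1) ^ k * moment k S h (compl_exp p k e {})] (mod int p)"
proof -
  have "int p dvd expansion_coeff k e T * moment k S h (compl_exp p k e T)"
    if T: "T \<subseteq> {..<k}" "T \<noteq> {}" for T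
  proof (cases "expansion_coeff k e T = 0")
    case False
    then have "tdeg k (compl_exp p k e T) \<le> d"
      using tdeg_compl_exp_less[OF prime_gt_1_nat[OF assms(1)] assms(3), of T] T assms(4) by auto
    then show ?thesis
      using orthogonal_uptoD[OF assms(2) compl_exp_in_exps[OF prime_gt_0_nat[OF assms(1)]]] by simp
  qed simp
  then have "[(\<Sum>T\<in>Pow {..<k} - {{}}. expansion_coeff k e T * moment k S h (compl_exp p k e T)) = 0]
      (mod int p)"
    unfolding cong_0_iff by (intro dvd_sum) auto
  then show ?thesis
    unfolding lagrange_coeff_expand
    by (subst sum.remove[of _ "{}"]) (auto simp: expansion_coeff_def cong_add_lcancel_0)
qed

definition residue_fun ::
    "nat \<Rightarrow> (nat \<Rightarrow> nat) set \<Rightarrow> ((nat \<Rightarrow> nat) \<Rightarrow> int) \<Rightarrow> (nat \<Rightarrow> nat) \<Rightarrow> nat" where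
  "residue_fun p S h \<alpha> = nat ((if \<alpha> \<in> S then h \<alpha> else 0) mod int p)"

lemma represents_residue_fun:
  assumes "prime p" "S \<subseteq> points p k"
  shows "represents p k
           (\<lambda>e. if e \<in> exps p k then nat (lagrange_coeff p k S h e mod int p) else 0)
           (residue_fun p S h)"
    (is "represents p k ?c _")
  unfolding represents_def
proof (intro conjI allI impI ballI)
  have p0: "0 < p" using prime_gt_0_nat[OF assms(1)] .
  then show "?c e < p" for e by (simp add: nat_less_iff)
  show "?c e = 0" if "e \<notin> exps p k" for e using that by simp
  fix \<alpha> assume \<alpha>: "\<alpha> \<in> points p k"
  have "finite S" using assms(2) finite_points finite_subset by blast
  have "int (\<Sum>e\<in>exps p k. ?c e * mono_eval k e \<alpha>)
      = (\<Sum>e\<in>exps p k. lagrange_coeff p k S h e mod int p * int (mono_eval k e \<alpha>))"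
    using p0 by (simp add: of_nat_sum cong: sum.cong_simp)
  also have "[\<dots> = (\<Sum>e\<in>exps p k. lagrange_coeff p k S h e * int (mono_eval k e \<alpha>))] (mod int p)"
    by (intro cong_sum cong_mult cong_refl) (simp add: cong_def)
  also have "(\<Sum>e\<in>exps p k. lagrange_coeff p k S h e * int (mono_eval k e \<alpha>))
      = (\<Sum>a\<in>S. h a * (\<Sum>e\<in>exps p k. indicator_coeff p k a e * int (mono_eval k e \<alpha>)))"
    unfolding lagrange_coeff_def
    by (simp add: sum_distrib_left sum_distrib_right sum.swap[of _ S] mult.assoc)
  also have "[\<dots> = (\<Sum>a\<in>S. h a * of_bool (\<alpha> = a))] (mod int p)"
    using assms \<alpha> by (intro cong_sum cong_scalar_left indicator_coeff_sum_cong) auto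
  also have "(\<Sum>a\<in>S. h a * of_bool (\<alpha> = a)) = (if \<alpha> \<in> S then h \<alpha> else 0)"
    using \<open>finite S\<close> by (simp add: of_bool_def if_distrib sum.delta cong: if_cong)
  finally show "residue_fun p S h \<alpha> = (\<Sum>e\<in>exps p k. ?c e * mono_eval k e \<alpha>) mod p"
    unfolding residue_fun_def cong_def by (simp add: nat_mod_as_int)
qed

lemma fun_degree_eq_residue_fun:
  assumes "prime p" "S \<subseteq> points p k" "h \<in> orthogonal_upto p k S d"
    and f: "f \<in> exps p k" "tdeg k f = Suc d" "\<not> int p dvd moment k S h f"
  shows "fun_degree_eq p k (residue_fun p S h) (k * (p - 1) - Suc d)"
proof -
  define c where "c = (\<lambda>e. if e \<in> exps p k then nat (lagrange_coeff p k S h e mod int p) else 0)"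
  have c_eq_0: "c e = 0 \<longleftrightarrow> int p dvd lagrange_coeff p k S h e" if "e \<in> exps p k" for e
    using that prime_gt_0_nat[OF assms(1)] by (simp add: c_def dvd_eq_mod_eq_0 nat_eq_iff)
  have lagrange_dvd_iff:
    "int p dvd lagrange_coeff p k S h e \<longleftrightarrow> int p dvd moment k S h (compl_exp p k e {})"
    if "e \<in> exps p k" "k * (p - 1) \<le> tdeg k e + Suc d" for e
    using cong_dvd_iff[OF lagrange_coeff_cong[OF assms(1,3) that]] by (simp add: dvd_mult_unit_iff')
  define e0 where "e0 = compl_exp p k f {}"
  have e0: "e0 \<in> exps p k" "tdeg k e0 + Suc d = k * (p - 1)" "compl_exp p k e0 {} = f"
    using compl_exp_in_exps[OF prime_gt_0_nat[OF assms(1)]] tdeg_compl_exp_empty[OF f(1)]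
      compl_exp_compl_exp[OF f(1)] f(2)
    by (simp_all add: e0_def)
  then have "c e0 \<noteq> 0" using f(3) c_eq_0 lagrange_dvd_iff by simp
  moreover have "tdeg k e0 = k * (p - 1) - Suc d" using e0(2) by linarith
  moreover have "tdeg k e \<le> k * (p - 1) - Suc d" if e: "e \<in> exps p k" "c e \<noteq> 0" for e
  proof (rule ccontr)
    assume "\<not> ?thesis"
    then have high: "k * (p - 1) < tdeg k e + Suc d" by linarith
    then have "tdeg k (compl_exp p k e {}) \<le> d" using tdeg_compl_exp_empty[OF e(1)] by linarith
    then have "int p dvd moment k S h (compl_exp p k e {})"
      using orthogonal_uptoD[OF assms(3) compl_exp_in_exps[OF prime_gt_0_nat[OF assms(1)]]] by blast
    with e high show False using c_eq_0 lagrange_dvd_iff by simp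
  qed
  moreover have "represents p k c (residue_fun p S h)"
    unfolding c_def by (rule represents_residue_fun[OF assms(1,2)])
  ultimately show ?thesis unfolding fun_degree_eq_def using e0(1) by blast
qed

lemma exists_sharp_orthogonal:
  assumes "prime p" "S \<subseteq> points p k" "card {f \<in> exps p k. tdeg k f \<le> d} < card S"
  shows "\<exists>h f. h \<in> orthogonal_upto p k S d \<and> f \<in> exps p k \<and> tdeg k f = Suc d \<and>
           \<not> int p dvd moment k S h f"
proof -
  have "finite S" using assms(2) finite_points finite_subset by blast
  then obtain h0 a where h0: "h0 \<in> orthogonal_upto p k S d" and a: "a \<in> S" "\<not> int p dvd h0 a"
    using exists_orthogonal_nonzero[OF assms(1) _ _ assms(3)] finite_exps
    by (fastforce intro: orthogonal_uptoI)
  have "\<not> orthogonal_upto p k S d \<subseteq> orthogonal_upto p k S (Suc d)"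
  proof
    assume "orthogonal_upto p k S d \<subseteq> orthogonal_upto p k S (Suc d)"
    then have "h0 \<in> orthogonal_upto p k S (Suc d + k * (p - 1))"
      using orthogonal_upto_Suc_stable[OF assms(1)] h0 by blast
    moreover have "tdeg k f \<le> Suc d + k * (p - 1)" if "f \<in> exps p k" for f
      using tdeg_compl_exp_empty[OF that] by linarith
    ultimately have "int p dvd h0 a"
      using dvd_of_dvd_all_moments[OF assms(1,2) _ a(1)] by (auto intro: orthogonal_uptoD)
    then show False using a(2) by blast
  qed
  then obtain h f where h: "h \<in> orthogonal_upto p k S d" and f: "f \<in> exps p k" "tdeg k f \<le> Suc d"
    and nd: "\<not> int p dvd moment k S h f"
    unfolding orthogonal_upto_def by blast
  have "\<not> tdeg k f \<le> d" using orthogonal_uptoD[OF h f(1)] nd by blast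
  then show ?thesis using h f nd by (intro exI[of _ h] exI[of _ f]) simp
qed

theorem lemma3p3:
  fixes p d k :: nat and S :: "(nat \<Rightarrow> nat) set"
  assumes "prime p" and "d > 0" and "k \<ge> d + 1"
    and "S \<subseteq> points p k"
    and "card S \<ge> ((d + k + 1) choose k) + 1"
  shows "\<exists>h. (\<forall>\<alpha>\<in>points p k. h \<alpha> < p) \<and>
             fun_degree_eq p k h (k * (p - 1) - (d + 1)) \<and> supp p k h \<subseteq> S"
proof -
  have "card {f \<in> exps p k. tdeg k f \<le> d} \<le> card (exps_upto k d)"
    by (intro card_mono finite_exps_upto) (auto simp: exps_def exps_upto_def)
  also have "\<dots> \<le> (d + k + 1) choose k"
    by (rule le_trans[OF card_exps_upto_le binomial_right_mono]) simp
  finally have "card {f \<in> exps p k. tdeg k f \<le> d} < card S" using assms(5) by linarith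
  then obtain h f where "h \<in> orthogonal_upto p k S d" "f \<in> exps p k" "tdeg k f = Suc d"
    "\<not> int p dvd moment k S h f"
    using exists_sharp_orthogonal[OF assms(1,4)] by blast
  then have "fun_degree_eq p k (residue_fun p S h) (k * (p - 1) - (d + 1))"
    using fun_degree_eq_residue_fun[OF assms(1,4)] by simp
  moreover have "residue_fun p S h \<alpha> < p" for \<alpha>
    using prime_gt_0_nat[OF assms(1)] by (simp add: residue_fun_def nat_less_iff)
  moreover have "supp p k (residue_fun p S h) \<subseteq> S"
    by (auto simp: supp_def residue_fun_def)
  ultimately show ?thesis by blast
qed

end
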